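(* Let $(L,\le,\bot,\top)$ be a complete lattice and $(\&_i,\swarrow^i,\nwarrow_i)$, $i=1,\dots,n$, adjoint triples on $L$ with $x\,\&_i\,\top=\top\,\&_i\,x=x$ for all $x\in L$ and all $i$. Let $(A,B,R,\sigma)$ be a normalized context having a decomposition into independent subcontexts $\{(A_\lambda,B_\lambda,R_\lambda,\sigma_\lambda)\mid\lambda\in\Lambda\}$. Let $\lambda\in\Lambda$, $a\in A_\lambda$ and $x\in L\setminus\{\bot\}$. Then for all $b\in B$, $$\phi_{a,x}^\downarrow(b)=\begin{cases}R(a,b)\nwarrow_{\sigma(a,b)}x & \text{if } b\in B_\lambda,\\ \bot&\text{otherwise.}\end{cases}$$
   Context: An adjoint triple on $L$ is a triple of maps $\&,\swarrow,\nwarrow\colon L\times L\to L$ with $x\le z\swarrow y\iff x\& y\le z\iff y\le z\nwarrow x$. A context is $(A,B,R,\sigma)$ with $A,B$ non-empty sets, $R\colon A\times B\to L$, $\sigma\colon A\times B\to\{1,\dots,n\}$; it is normalized if every $a\in A$ has $b_1,b_2$ with $R(a,b_1)\ne\bot$, $R(a,b_2)=\bot$, and every $b\in B$ has $a_1,a_2$ with $R(a_1,b)\neq\bot$, $R(a_2,b)=\bot$. For $f\colon A\to L$, $f^\downarrow(b)=\inf_{a\in A}R(a,b)\nwarrow_{\sigma(a,b)}f(a)$. The fuzzy-attribute $\phi_{a,x}\colon A\to L$ takes value $x$ at $a$ and $\bot$ elsewhere. A separable subcontext is a tuple $(Y,X,R_{Y\times X},\sigma_{Y\times X})$ (restrictions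 of $R,\sigma$) with $Y\subsetneq A$, $X\subsetneq B$ non-empty, some $a\in Y,b\in X$ with $R(a,b)\ne\bot$, $R(a,b')=\bot$ for all $(a,b')\in Y\times(B\setminus X)$, and $R(a',b)=\bot$ for all $(a',b)\in(A\setminus Y)\times X$. An operator $\&$ has zero-divisors if $x\&y=\bot$ for some $x\ne\bot$, $y\neq\bot$. The context has a decomposition into independent subcontexts $\{(A_\lambda,B_\lambda,R_\lambda,\sigma_\lambda)\mid\lambda\in\Lambda\}$ ($\Lambda$ non-empty, $R_\lambda,\sigma_\lambda$ restrictions to $A_\lambda\times B_\lambda$) if each tuple is a separable subcontext, the $A_\lambda$ are pairwise disjoint with union $A$, the $B_\lambda$ are pairwise disjoint with union $B$, and for every $\lambda$ and every $(a,b)\in((A\setminus A_\lambda)\times B_\lambda)\cup(A_\lambda\times(B\setminus B_\lambda))$ the conjunctor $\&_{\sigma(a,b)}$ has no zero-divisors. *)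

theory Defs
  imports Main
begin

definition adjoint_triple ::
  "('a::complete_lattice \<Rightarrow> 'a \<Rightarrow> 'a) \<Rightarrow> ('a \<Rightarrow> 'a \<Rightarrow> 'a) \<Rightarrow> ('a \<Rightarrow> 'a \<Rightarrow> 'a) \<Rightarrow> bool" where
  "adjoint_triple cj sw nw \<longleftrightarrow>
     (\<forall>x y z. (x \<le> sw z y \<longleftrightarrow> cj x y \<le> z) \<and> (cj x y \<le> z \<longleftrightarrow> y \<le> nw z x))"

definition is_context ::
  "nat \<Rightarrow> 'g set \<Rightarrow> 'm set \<Rightarrow> ('g \<Rightarrow> 'm \<Rightarrow> 'a) \<Rightarrow> ('g \<Rightarrow> 'm \<Rightarrow> nat) \<Rightarrow> bool" where
  "is_context n A B R \<sigma> \<longleftrightarrow> A \<noteq> {} \<and> B \<noteq> {} \<and> (\<forall>a\<in>A. \<forall>b\<in>B. \<sigma> a b \<in> {1..n})"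

definition normalized ::
  "'g set \<Rightarrow> 'm set \<Rightarrow> ('g \<Rightarrow> 'm \<Rightarrow> 'a::complete_lattice) \<Rightarrow> bool" where
  "normalized A B R \<longleftrightarrow>
     (\<forall>a\<in>A. (\<exists>b1\<in>B. R a b1 \<noteq> bot) \<and> (\<exists>b2\<in>B. R a b2 = bot)) \<and>
     (\<forall>b\<in>B. (\<exists>a1\<in>A. R a1 b \<noteq> bot) \<and> (\<exists>a2\<in>A. R a2 b = bot))"

definition down ::
  "(nat \<Rightarrow> 'a \<Rightarrow> 'a \<Rightarrow> 'a::complete_lattice) \<Rightarrow> 'g set \<Rightarrow> ('g \<Rightarrow> 'm \<Rightarrow> 'a) \<Rightarrow> ('g \<Rightarrow> 'm \<Rightarrow> nat)
    \<Rightarrow> ('g \<Rightarrow> 'a) \<Rightarrow> 'm \<Rightarrow> 'a" where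
  "down nw A R \<sigma> f b = (INF a\<in>A. nw (\<sigma> a b) (R a b) (f a))"

definition phi :: "'g \<Rightarrow> 'a::complete_lattice \<Rightarrow> 'g \<Rightarrow> 'a" where
  "phi a x = (\<lambda>a'. if a' = a then x else bot)"

definition separable_subcontext ::
  "'g set \<Rightarrow> 'm set \<Rightarrow> ('g \<Rightarrow> 'm \<Rightarrow> 'a::complete_lattice) \<Rightarrow> 'g set \<Rightarrow> 'm set \<Rightarrow> bool" where
  "separable_subcontext A B R Y X \<longleftrightarrow>
     Y \<subset> A \<and> X \<subset> B \<and> Y \<noteq> {} \<and> X \<noteq> {} \<and>
     (\<exists>a\<in>Y. \<exists>b\<in>X. R a b \<noteq> bot) \<and>
     (\<forall>a\<in>Y. \<forall>b'\<in>B - X. R a b' = bot) \<and>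
     (\<forall>a'\<in>A - Y. \<forall>b\<in>X. R a' b = bot)"

definition has_zero_divisors :: "('a::complete_lattice \<Rightarrow> 'a \<Rightarrow> 'a) \<Rightarrow> bool" where
  "has_zero_divisors cj \<longleftrightarrow> (\<exists>x y. x \<noteq> bot \<and> y \<noteq> bot \<and> cj x y = bot)"

definition independent_decomposition ::
  "(nat \<Rightarrow> 'a::complete_lattice \<Rightarrow> 'a \<Rightarrow> 'a) \<Rightarrow> 'g set \<Rightarrow> 'm set \<Rightarrow> ('g \<Rightarrow> 'm \<Rightarrow> 'a)
    \<Rightarrow> ('g \<Rightarrow> 'm \<Rightarrow> nat) \<Rightarrow> 'l set \<Rightarrow> ('l \<Rightarrow> 'g set) \<Rightarrow> ('l \<Rightarrow> 'm set) \<Rightarrow> bool" where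
  "independent_decomposition cj A B R \<sigma> \<Lambda> As Bs \<longleftrightarrow>
     \<Lambda> \<noteq> {} \<and>
     (\<forall>l\<in>\<Lambda>. separable_subcontext A B R (As l) (Bs l)) \<and>
     (\<forall>l\<in>\<Lambda>. \<forall>l'\<in>\<Lambda>. l \<noteq> l' \<longrightarrow> As l \<inter> As l' = {} \<and> Bs l \<inter> Bs l' = {}) \<and>
     (\<Union>l\<in>\<Lambda>. As l) = A \<and> (\<Union>l\<in>\<Lambda>. Bs l) = B \<and>
     (\<forall>l\<in>\<Lambda>. \<forall>(a,b) \<in> ((A - As l) \<times> Bs l) \<union> (As l \<times> (B - Bs l)).
        \<not> has_zero_divisors (cj (\<sigma> a b)))"

end

theory Submission
  imports Defs
begin

text \<open>Since \<open>\<phi>\<^sub>a\<^sub>,\<^sub>x\<close> vanishes off \<open>a\<close> and \<open>z \<nwarrow> \<bottom> = \<top>\<close> for every adjoint triple, the infimum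
  defining \<open>\<phi>\<^sub>a\<^sub>,\<^sub>x\<^sup>\<down>(b)\<close> collapses to its single term \<open>R(a,b) \<nwarrow> x\<close>. For \<open>b \<notin> B\<^sub>\<lambda>\<close>
  separability gives \<open>R(a,b) = \<bottom>\<close>, and \<open>x & (\<bottom> \<nwarrow> x) \<le> \<bottom>\<close> forces \<open>\<bottom> \<nwarrow> x = \<bottom>\<close>
  because the conjunctor at \<open>(a,b)\<close> has no zero divisors.\<close>

lemma adjoint_triple_nw_bot_right:
  assumes "adjoint_triple cj sw nw"
  shows "nw z bot = top"
proof -
  have "cj bot top \<le> z \<longleftrightarrow> bot \<le> sw z top" and "cj bot top \<le> z \<longleftrightarrow> top \<le> nw z bot"
    using assms unfolding adjoint_triple_def by blast+
  then show ?thesis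
    by (simp add: top_unique)
qed

lemma adjoint_triple_nw_bot_left:
  assumes "adjoint_triple cj sw nw" and "\<not> has_zero_divisors cj" and "x \<noteq> bot"
  shows "nw bot x = bot"
proof -
  have "cj x (nw bot x) \<le> bot"
    using assms(1) unfolding adjoint_triple_def by blast
  then show ?thesis
    using assms(2,3) bot_unique unfolding has_zero_divisors_def by blast
qed

lemma down_phi:
  assumes "a \<in> A"
    and adj: "\<And>a'. a' \<in> A \<Longrightarrow> adjoint_triple (cj (\<sigma> a' b)) (sw (\<sigma> a' b)) (nw (\<sigma> a' b))"
  shows "down nw A R \<sigma> (phi a x) b = nw (\<sigma> a b) (R a b) x"
proof -
  let ?f = "\<lambda>a'. nw (\<sigma> a' b) (R a' b) (phi a x a')"
  have "\<And>a'. a' \<in> A - {a} \<Longrightarrow> ?f a' = top"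
    using adjoint_triple_nw_bot_right[OF adj] by (simp add: phi_def)
  then have rest: "(INF a'\<in>A - {a}. ?f a') = top"
    by simp
  have "down nw A R \<sigma> (phi a x) b = inf (?f a) (INF a'\<in>A - {a}. ?f a')"
    using INF_insert[of ?f a "A - {a}"] \<open>a \<in> A\<close> by (simp only: down_def insert_Diff)
  also have "\<dots> = nw (\<sigma> a b) (R a b) x"
    unfolding rest by (simp add: phi_def)
  finally show ?thesis .
qed

lemma independent_decomposition_outside_block:
  assumes "independent_decomposition cj A B R \<sigma> \<Lambda> As Bs"
    and "l \<in> \<Lambda>" and "a \<in> As l" and "b \<in> B - Bs l"
  shows "R a b = bot" and "\<not> has_zero_divisors (cj (\<sigma> a b))"
proof -
  have "separable_subcontext A B R (As l) (Bs l)"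
    using assms(1,2) unfolding independent_decomposition_def by blast
  then show "R a b = bot"
    using assms(3,4) unfolding separable_subcontext_def by blast
  have "(a, b) \<in> ((A - As l) \<times> Bs l) \<union> (As l \<times> (B - Bs l))"
    using assms(3,4) by blast
  then show "\<not> has_zero_divisors (cj (\<sigma> a b))"
    using assms(1,2) unfolding independent_decomposition_def by blast
qed

theorem lemma29:
  fixes n :: nat
    and cj sw nw :: "nat \<Rightarrow> 'a::complete_lattice \<Rightarrow> 'a \<Rightarrow> 'a"
    and A :: "'g set" and B :: "'m set"
    and R :: "'g \<Rightarrow> 'm \<Rightarrow> 'a" and \<sigma> :: "'g \<Rightarrow> 'm \<Rightarrow> nat"
    and \<Lambda> :: "'l set" and As :: "'l \<Rightarrow> 'g set" and Bs :: "'l \<Rightarrow> 'm set"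
    and l :: 'l and a :: 'g and x :: 'a
  assumes adj: "\<forall>i\<in>{1..n}. adjoint_triple (cj i) (sw i) (nw i)"
    and unit: "\<forall>i\<in>{1..n}. \<forall>y. cj i y top = y \<and> cj i top y = y"
    and ctx: "is_context n A B R \<sigma>"
    and norm: "normalized A B R"
    and dec: "independent_decomposition cj A B R \<sigma> \<Lambda> As Bs"
    and l: "l \<in> \<Lambda>" and a: "a \<in> As l" and x: "x \<noteq> bot"
  shows "\<forall>b\<in>B. down nw A R \<sigma> (phi a x) b =
           (if b \<in> Bs l then nw (\<sigma> a b) (R a b) x else bot)"
proof
  fix b assume b: "b \<in> B"
  have "a \<in> A"
    using dec l a unfolding independent_decomposition_def by blast
  have adj_at: "\<And>a'. a' \<in> A \<Longrightarrow> adjoint_triple (cj (\<sigma> a' b)) (sw (\<sigma> a' b)) (nw (\<sigma> a' b))"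
    using adj ctx b unfolding is_context_def by blast
  have "down nw A R \<sigma> (phi a x) b = nw (\<sigma> a b) (R a b) x"
    using \<open>a \<in> A\<close> adj_at by (rule down_phi)
  moreover have "nw (\<sigma> a b) (R a b) x = bot" if "b \<notin> Bs l"
    using independent_decomposition_outside_block[OF dec l a] b that
      adjoint_triple_nw_bot_left[OF adj_at[OF \<open>a \<in> A\<close>] _ x] by simp
  ultimately show "down nw A R \<sigma> (phi a x) b =
      (if b \<in> Bs l then nw (\<sigma> a b) (R a b) x else bot)"
    by simp
qed

end
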